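(* Let $(g,\gamma)$ be a construction pair on an abelian group $(X,+)$. Then $(g^{-1},g\circ\gamma)$ is a construction pair on $(X,+)$, where $(g\circ\gamma)(x,y)=g(\gamma(x,y))$.
   Context: A map $\gamma:X\times X\to X$ is symmetric if $\gamma(x,y)=\gamma(y,x)$, alternating if $\gamma(x,x)=0$, biadditive if additive in each argument. A construction pair on $(X,+)$ is a pair $(g,\gamma)$ where $g$ is a permutation of $X$ and $\gamma:X\times X\to X$ is symmetric, alternating and biadditive, such that for all $x,y,z\in X$: (C1) $g^{-1}(g(x)+g(y))=x+y+\gamma(x,y)+g^{-1}(\gamma(x,y))+g^{-2}(\gamma(x,y))$; (C2) $\gamma(\gamma(x,y),z)=0$; (C3) $g^{-1}(\gamma(x,y))=\gamma(g(x),y)$. *)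

theory Defs
  imports Main
begin

definition biadditive :: "('a::ab_group_add \<Rightarrow> 'a \<Rightarrow> 'a) \<Rightarrow> bool" where
  "biadditive \<gamma> \<longleftrightarrow>
     (\<forall>x y z. \<gamma> (x + y) z = \<gamma> x z + \<gamma> y z) \<and>
     (\<forall>x y z. \<gamma> x (y + z) = \<gamma> x y + \<gamma> x z)"

definition symmetric_map :: "('a \<Rightarrow> 'a \<Rightarrow> 'a) \<Rightarrow> bool" where
  "symmetric_map \<gamma> \<longleftrightarrow> (\<forall>x y. \<gamma> x y = \<gamma> y x)"

definition alternating :: "('a::zero \<Rightarrow> 'a \<Rightarrow> 'a) \<Rightarrow> bool" where
  "alternating \<gamma> \<longleftrightarrow> (\<forall>x. \<gamma> x x = 0)"

definition construction_pair :: "('a::ab_group_add \<Rightarrow> 'a) \<Rightarrow> ('a \<Rightarrow> 'a \<Rightarrow> 'a) \<Rightarrow> bool" where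
  "construction_pair g \<gamma> \<longleftrightarrow>
     bij g \<and> symmetric_map \<gamma> \<and> alternating \<gamma> \<and> biadditive \<gamma> \<and>
     (\<forall>x y. inv g (g x + g y) = x + y + \<gamma> x y + inv g (\<gamma> x y) + inv g (inv g (\<gamma> x y))) \<and>
     (\<forall>x y z. \<gamma> (\<gamma> x y) z = 0) \<and>
     (\<forall>x y. inv g (\<gamma> x y) = \<gamma> (g x) y)"

end

theory Submission
  imports Defs
begin

text \<open>Write \<open>h = g\<inverse>\<close>. Condition (C3) moves \<open>h\<close> and \<open>g\<close> across \<open>\<gamma>\<close>, so \<open>c = \<gamma>(a,b)\<close>,
  \<open>h c\<close>, \<open>h (h c)\<close> and \<open>g c\<close> are again values of \<open>\<gamma>\<close>. Values of \<open>\<gamma>\<close> are annihilated by \<open>\<gamma>\<close>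
  (C2), so by (C1) \<open>g\<close> is additive whenever one summand is a value of \<open>\<gamma>\<close>, and these
  values have order two since \<open>\<gamma>\<close> is alternating and symmetric. Applying \<open>g\<close> to (C1) for \<open>a = h x\<close>,
  \<open>b = h y\<close> and splitting off the \<open>\<gamma>\<close>-values then yields (C1) for the pair \<open>(h, g \<circ> \<gamma>)\<close>;
  the remaining conditions are immediate.\<close>

lemma biadditive_zero_right:
  assumes "biadditive \<gamma>"
  shows "\<gamma> x 0 = 0"
  using assms unfolding biadditive_def by (metis add_cancel_left_right)

lemma biadditive_alternating_skew:
  assumes "biadditive \<gamma>" and "alternating \<gamma>"
  shows "\<gamma> y x = - \<gamma> x y"
proof -
  have "0 = \<gamma> (x + y) (x + y)"
    using assms(2) unfolding alternating_def by simp
  also have "\<dots> = \<gamma> x x + \<gamma> x y + (\<gamma> y x + \<gamma> y y)"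
    using assms(1) unfolding biadditive_def by (simp add: add.assoc)
  also have "\<dots> = \<gamma> x y + \<gamma> y x"
    using assms(2) unfolding alternating_def by simp
  finally show ?thesis
    by (simp add: eq_neg_iff_add_eq_0 add.commute)
qed

locale construction_pair_setting =
  fixes g :: "'a::ab_group_add \<Rightarrow> 'a" and \<gamma> :: "'a \<Rightarrow> 'a \<Rightarrow> 'a"
  assumes construction_pair: "construction_pair g \<gamma>"
begin

lemma bij: "bij g"
  and symmetric: "\<gamma> x y = \<gamma> y x"
  and alternating: "alternating \<gamma>"
  and biadditive: "biadditive \<gamma>"
  and C1: "inv g (g x + g y) = x + y + \<gamma> x y + inv g (\<gamma> x y) + inv g (inv g (\<gamma> x y))"
  and C2: "\<gamma> (\<gamma> x y) z = 0"
  and C3: "inv g (\<gamma> x y) = \<gamma> (g x) y"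
  using construction_pair unfolding construction_pair_def symmetric_map_def by blast+

lemma inv_g_g [simp]: "inv g (g x) = x"
  using bij by (simp add: bij_is_inj)

lemma g_inv_g [simp]: "g (inv g x) = x"
  using bij by (simp add: bij_is_surj surj_f_inv_f)

lemma gamma_add_left: "\<gamma> (x + y) z = \<gamma> x z + \<gamma> y z"
  and gamma_add_right: "\<gamma> x (y + z) = \<gamma> x y + \<gamma> x z"
  using biadditive unfolding biadditive_def by blast+

lemma gamma_gamma_right: "\<gamma> u (\<gamma> x y) = 0"
  using C2 symmetric by metis

lemma uminus_gamma: "- \<gamma> x y = \<gamma> x y"
  using biadditive_alternating_skew[OF biadditive alternating] symmetric by metis

lemma g_gamma: "g (\<gamma> x y) = \<gamma> (inv g x) y"
  using C3[of "inv g x" y] by (metis g_inv_g)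

lemma g_zero: "g 0 = 0"
  using g_gamma[of 0 0] biadditive_zero_right[OF biadditive] by metis

lemma inv_g_zero: "inv g 0 = 0"
  using inv_g_g[of 0] g_zero by simp

lemma g_add_gamma: "g (u + \<gamma> x y) = g u + g (\<gamma> x y)"
proof -
  have "inv g (g u + g (\<gamma> x y)) = u + \<gamma> x y"
    using C1[of u "\<gamma> x y"] gamma_gamma_right inv_g_zero by simp
  then show ?thesis
    by (metis g_inv_g)
qed

text \<open>(C1) read through \<open>g\<close>, with \<open>c = \<gamma>(a,b)\<close>, \<open>h c = \<gamma>(g a, b)\<close> and \<open>h (h c) = \<gamma>(g (g a), b)\<close>
  split off one after the other.\<close>
lemma g_add: "g (a + b) = g a + g b + g (\<gamma> a b) + \<gamma> a b + inv g (\<gamma> a b)"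
proof -
  have "g a + g b = g (a + b + \<gamma> a b + \<gamma> (g a) b + \<gamma> (g (g a)) b)"
    using C1[of a b] C3 by (metis g_inv_g)
  also have "\<dots> = g (a + b) + g (\<gamma> a b) + \<gamma> a b + inv g (\<gamma> a b)"
    by (simp add: g_add_gamma C3 g_gamma)
  finally have "g (a + b) = g a + g b - g (\<gamma> a b) - \<gamma> a b - inv g (\<gamma> a b)"
    by (simp add: algebra_simps)
  then show ?thesis
    by (simp only: diff_conv_add_uminus g_gamma C3 uminus_gamma)
qed

lemma gamma_g_g: "\<gamma> (g a) (g b) = inv g (inv g (\<gamma> a b))"
  by (metis C3 symmetric)

lemma construction_pair_inverse: "construction_pair (inv g) (\<lambda>x y. g (\<gamma> x y))"
proof -
  have inv_inv: "inv (inv g) = g"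
    using bij by (rule inv_inv_eq)
  have C1': "g (inv g x + inv g y) = x + y + g (\<gamma> x y) + g (g (\<gamma> x y)) + g (g (g (\<gamma> x y)))"
    for x y
    using g_add[of "inv g x" "inv g y"] gamma_g_g[of "inv g x" "inv g y"] by simp
  show ?thesis
    unfolding construction_pair_def symmetric_map_def alternating_def biadditive_def inv_inv
    using bij_imp_bij_inv[OF bij] symmetric alternating g_zero C1' C2 g_gamma
    by (simp add: alternating_def gamma_add_left gamma_add_right g_add_gamma)
qed

end

theorem mainTheorem19:
  fixes g :: "'a::ab_group_add \<Rightarrow> 'a" and \<gamma> :: "'a \<Rightarrow> 'a \<Rightarrow> 'a"
  assumes "construction_pair g \<gamma>"
  shows "construction_pair (inv g) (\<lambda>x y. g (\<gamma> x y))"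
proof -
  interpret construction_pair_setting g \<gamma>
    using assms by unfold_locales
  show ?thesis
    by (rule construction_pair_inverse)
qed

end
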